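(* Let $\mathcal G$ be a doubly connected molecular graph. Construct $\mathcal G_{new}$ from $\mathcal G$ as follows: add a new molecule $\mathcal M_{new}$; add a diffusive edge $b_1$ joining $\mathcal M_{new}$ and a molecule $\mathcal M_1$ of $\mathcal G$, and a blue solid edge $b_2$ joining $\mathcal M_{new}$ and a molecule $\mathcal M_2$ of $\mathcal G$; and replace a blue solid edge $b$ of $\mathcal G$ joining molecules $\mathcal M_3$ and $\mathcal M_4$ by two blue solid edges, $b_3$ joining $\mathcal M_3$ and $\mathcal M_{new}$ and $b_4$ joining $\mathcal M_4$ and $\mathcal M_{new}$. Then the blue solid edge $b_2$ is redundant in $\mathcal G_{new}$.
   Context: A molecular graph is a finite multigraph whose vertices are called molecules and each of whose edges joins two distinct molecules and is either a diffusive edge or a blue solid edge (parallel edges are allowed). A molecular graph is doubly connected if there exist two disjoint sets of edges, $\mathcal B_{black}$ consisting only of diffusive edges and $\mathcal B_{blue}$ consisting only of blue solid or diffusive edges, such that each of $\mathcal B_{black}$ and $\mathcal B_{blue}$ contains a spanning tree of the set of all molecules. A blue solid edge $e$ of a doubly connected graph is redundant if the graph obtained by deleting $e$ is still doubly connected. *)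

theory Defs
  imports Main
begin

text \<open>Molecular graphs as finite multigraphs: a set V of molecules, a set E of edge
  identifiers, an endpoint map (unordered: both orientations are treated alike) and
  a kind map.\<close>

datatype edge_kind = Diffusive | BlueSolid

definition molecular_graph ::
  "'v set \<Rightarrow> 'e set \<Rightarrow> ('e \<Rightarrow> 'v \<times> 'v) \<Rightarrow> bool" where
  "molecular_graph V E ends \<longleftrightarrow> finite V \<and> finite E \<and>
     (\<forall>e\<in>E. fst (ends e) \<in> V \<and> snd (ends e) \<in> V \<and> fst (ends e) \<noteq> snd (ends e))"

definition edge_rel :: "('e \<Rightarrow> 'v \<times> 'v) \<Rightarrow> 'e set \<Rightarrow> ('v \<times> 'v) set" where
  "edge_rel ends T = {(x, y). \<exists>e\<in>T. ends e = (x, y) \<or> ends e = (y, x)}"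

definition connects :: "'v set \<Rightarrow> ('e \<Rightarrow> 'v \<times> 'v) \<Rightarrow> 'e set \<Rightarrow> bool" where
  "connects V ends T \<longleftrightarrow> (\<forall>u\<in>V. \<forall>w\<in>V. (u, w) \<in> (edge_rel ends T)\<^sup>*)"

definition spanning_tree :: "'v set \<Rightarrow> ('e \<Rightarrow> 'v \<times> 'v) \<Rightarrow> 'e set \<Rightarrow> bool" where
  "spanning_tree V ends T \<longleftrightarrow> connects V ends T \<and> (\<forall>e\<in>T. \<not> connects V ends (T - {e}))"

definition contains_spanning_tree :: "'v set \<Rightarrow> ('e \<Rightarrow> 'v \<times> 'v) \<Rightarrow> 'e set \<Rightarrow> bool" where
  "contains_spanning_tree V ends B \<longleftrightarrow> (\<exists>T. T \<subseteq> B \<and> spanning_tree V ends T)"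

definition doubly_connected ::
  "'v set \<Rightarrow> 'e set \<Rightarrow> ('e \<Rightarrow> 'v \<times> 'v) \<Rightarrow> ('e \<Rightarrow> edge_kind) \<Rightarrow> bool" where
  "doubly_connected V E ends kind \<longleftrightarrow>
     (\<exists>Bblack Bblue. Bblack \<subseteq> E \<and> Bblue \<subseteq> E \<and> Bblack \<inter> Bblue = {} \<and>
        (\<forall>e\<in>Bblack. kind e = Diffusive) \<and>
        (\<forall>e\<in>Bblue. kind e = BlueSolid \<or> kind e = Diffusive) \<and>
        contains_spanning_tree V ends Bblack \<and> contains_spanning_tree V ends Bblue)"

definition redundant ::
  "'v set \<Rightarrow> 'e set \<Rightarrow> ('e \<Rightarrow> 'v \<times> 'v) \<Rightarrow> ('e \<Rightarrow> edge_kind) \<Rightarrow> 'e \<Rightarrow> bool" where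
  "redundant V E ends kind e \<longleftrightarrow>
     e \<in> E \<and> kind e = BlueSolid \<and> doubly_connected V E ends kind \<and>
     doubly_connected V (E - {e}) ends kind"

end

theory Submission
  imports Defs
begin

(* Deleting b2 leaves a doubly connected graph: the black spanning structure of G,
   which avoids the blue solid edge b, extends to the new molecule through the
   pendant diffusive edge b1, and the blue one extends by replacing b with the path
   M3 - Mnew - M4 formed by b3 and b4.  Adding b2 back preserves double connectivity. *)

lemma edge_rel_sym:
  "(x, y) \<in> edge_rel ends T \<Longrightarrow> (y, x) \<in> edge_rel ends T"
  by (auto simp: edge_rel_def)

lemma edge_rel_mono: "T \<subseteq> T' \<Longrightarrow> edge_rel ends T \<subseteq> edge_rel ends T'"
  by (auto simp: edge_rel_def)

lemma edge_rel_cong: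
  "(\<And>e. e \<in> T \<Longrightarrow> ends' e = ends e) \<Longrightarrow> edge_rel ends' T = edge_rel ends T"
  by (auto simp: edge_rel_def)

lemma connects_transfer:
  assumes "connects V ends T" and "edge_rel ends T \<subseteq> (edge_rel ends' T')\<^sup>*"
  shows "connects V ends' T'"
proof -
  have "(edge_rel ends T)\<^sup>* \<subseteq> (edge_rel ends' T')\<^sup>*"
    using assms(2) by (rule rtrancl_subset_rtrancl)
  then show ?thesis using assms(1) unfolding connects_def by blast
qed

lemma connects_extend:
  assumes "connects V ends T" and "\<And>e. e \<in> T \<Longrightarrow> ends' e = ends e" and "T \<subseteq> T'"
  shows "connects V ends' T'"
proof (rule connects_transfer[OF assms(1)])
  have "edge_rel ends T = edge_rel ends' T" using edge_rel_cong[OF assms(2)] by (rule sym)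
  also have "\<dots> \<subseteq> edge_rel ends' T'" using assms(3) by (rule edge_rel_mono)
  finally show "edge_rel ends T \<subseteq> (edge_rel ends' T')\<^sup>*"
    by (auto intro: r_into_rtrancl)
qed

lemma connects_insert_vertex:
  assumes "connects V ends T" and "x \<in> V" and "(v, x) \<in> edge_rel ends T"
  shows "connects (insert v V) ends T"
proof -
  let ?R = "(edge_rel ends T)\<^sup>*"
  have "(u, x) \<in> ?R" if "u \<in> insert v V" for u
    using that assms by (auto simp: connects_def)
  moreover have "(x, w) \<in> ?R" if "w \<in> insert v V" for w
    using that assms by (auto simp: connects_def intro: edge_rel_sym)
  ultimately show ?thesis unfolding connects_def by (meson rtrancl_trans)
qed

lemma connects_add_pendant_edge:
  assumes "connects V ends T" and "\<And>e. e \<in> T \<Longrightarrow> ends' e = ends e"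
    and "ends' e0 = (v, x)" and "x \<in> V"
  shows "connects (insert v V) ends' (insert e0 T)"
proof (rule connects_insert_vertex)
  show "connects V ends' (insert e0 T)"
    using assms(1,2) subset_insertI by (rule connects_extend)
  show "(v, x) \<in> edge_rel ends' (insert e0 T)"
    using assms(3) unfolding edge_rel_def by blast
  show "x \<in> V" by (rule assms(4))
qed

lemma connects_subdivide_edge:
  assumes "connects V ends T" and "\<And>e. e \<in> T - {b} \<Longrightarrow> ends' e = ends e"
    and "ends b = (u, w)" and "ends' e3 = (u, v)" and "ends' e4 = (w, v)" and "u \<in> V"
  shows "connects (insert v V) ends' ({e3, e4} \<union> (T - {b}))"
proof (rule connects_insert_vertex)
  let ?T' = "{e3, e4} \<union> (T - {b})"
  have uv: "(u, v) \<in> edge_rel ends' ?T'" and wv: "(w, v) \<in> edge_rel ends' ?T'"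
    using assms(4,5) unfolding edge_rel_def by blast+
  have "(u, w) \<in> (edge_rel ends' ?T')\<^sup>*" "(w, u) \<in> (edge_rel ends' ?T')\<^sup>*"
    using uv wv edge_rel_sym[OF uv] edge_rel_sym[OF wv]
    by (meson converse_rtrancl_into_rtrancl r_into_rtrancl)+
  moreover have "edge_rel ends (T - {b}) \<subseteq> edge_rel ends' ?T'"
    using edge_rel_cong[of "T - {b}" ends' ends] assms(2) edge_rel_mono[of "T - {b}" ?T'] by auto
  moreover have "edge_rel ends T \<subseteq> insert (u, w) (insert (w, u) (edge_rel ends (T - {b})))"
    using assms(3) unfolding edge_rel_def by auto
  ultimately have "edge_rel ends T \<subseteq> (edge_rel ends' ?T')\<^sup>*"
    by (auto intro: r_into_rtrancl)
  with assms(1) show "connects V ends' ?T'" by (rule connects_transfer)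
  show "(v, u) \<in> edge_rel ends' ?T'" using uv by (rule edge_rel_sym)
  show "u \<in> V" by (rule assms(6))
qed

lemma contains_spanning_tree_iff_connects:
  assumes "finite B"
  shows "contains_spanning_tree V ends B \<longleftrightarrow> connects V ends B"
proof
  show "contains_spanning_tree V ends B \<Longrightarrow> connects V ends B"
    by (auto simp: contains_spanning_tree_def spanning_tree_def intro: connects_extend)
  show "connects V ends B \<Longrightarrow> contains_spanning_tree V ends B"
    using assms
  proof (induction B rule: finite_psubset_induct)
    case (psubset A)
    show ?case
    proof (cases "spanning_tree V ends A")
      case True
      then show ?thesis unfolding contains_spanning_tree_def by blast
    next
      case False
      then obtain e where "e \<in> A" and "connects V ends (A - {e})"
        using psubset.prems unfolding spanning_tree_def by blast
      then have "contains_spanning_tree V ends (A - {e})"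
        by (intro psubset.IH) auto
      then show ?thesis unfolding contains_spanning_tree_def by blast
    qed
  qed
qed

lemma doubly_connected_iff_connects:
  assumes "finite E"
  shows "doubly_connected V E ends kind \<longleftrightarrow>
     (\<exists>Bblack Bblue. Bblack \<subseteq> E \<and> Bblue \<subseteq> E \<and> Bblack \<inter> Bblue = {} \<and>
        (\<forall>e\<in>Bblack. kind e = Diffusive) \<and>
        (\<forall>e\<in>Bblue. kind e = BlueSolid \<or> kind e = Diffusive) \<and>
        connects V ends Bblack \<and> connects V ends Bblue)"
proof -
  have "contains_spanning_tree V ends B \<longleftrightarrow> connects V ends B" if "B \<subseteq> E" for B
    using finite_subset[OF that assms] by (rule contains_spanning_tree_iff_connects)
  then show ?thesis unfolding doubly_connected_def by blast
qed

lemma doubly_connected_mono: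
  "doubly_connected V E ends kind \<Longrightarrow> E \<subseteq> E' \<Longrightarrow> doubly_connected V E' ends kind"
  unfolding doubly_connected_def by (meson subset_trans)

lemma doubly_connected_subdivide_add_pendant:
  assumes "molecular_graph V E ends" and "doubly_connected V E ends kind"
    and "b \<in> E" and "kind b = BlueSolid" and "ends b = (u, w)" and "x \<in> V"
    and "p \<notin> E" and "s \<notin> E" and "t \<notin> E" and "distinct [p, s, t]"
    and old: "\<And>e. e \<in> E \<Longrightarrow> ends' e = ends e \<and> kind' e = kind e"
    and "ends' p = (v, x)" and "ends' s = (u, v)" and "ends' t = (w, v)"
    and "kind' p = Diffusive" and "kind' s = BlueSolid" and "kind' t = BlueSolid"
  shows "doubly_connected (insert v V) ({p, s, t} \<union> (E - {b})) ends' kind'"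
proof -
  have fin: "finite E" and "u \<in> V"
    using assms(1,3,5) unfolding molecular_graph_def by force+
  then have fin': "finite ({p, s, t} \<union> (E - {b}))" by simp
  obtain Bk Bu where B: "Bk \<subseteq> E" "Bu \<subseteq> E" "Bk \<inter> Bu = {}"
    and kinds: "\<forall>e\<in>Bk. kind e = Diffusive" "\<forall>e\<in>Bu. kind e = BlueSolid \<or> kind e = Diffusive"
    and conn: "connects V ends Bk" "connects V ends Bu"
    using assms(2) unfolding doubly_connected_iff_connects[OF fin] by auto
  have "b \<notin> Bk" using kinds(1) assms(4) by auto
  have "connects (insert v V) ends' (insert p Bk)"
    using old B(1) assms(6,12) by (intro connects_add_pendant_edge[OF conn(1)]) auto
  moreover have "connects (insert v V) ends' ({s, t} \<union> (Bu - {b}))"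
    using old B(2) assms(5,13,14) \<open>u \<in> V\<close> by (intro connects_subdivide_edge[OF conn(2)]) auto
  ultimately show ?thesis
    unfolding doubly_connected_iff_connects[OF fin']
  proof (intro exI conjI)
    show "insert p Bk \<subseteq> {p, s, t} \<union> (E - {b})"
      and "{s, t} \<union> (Bu - {b}) \<subseteq> {p, s, t} \<union> (E - {b})"
      using B(1,2) \<open>b \<notin> Bk\<close> by auto
    show "insert p Bk \<inter> ({s, t} \<union> (Bu - {b})) = {}"
      using B assms(7-10) by auto
    show "\<forall>e\<in>insert p Bk. kind' e = Diffusive"
      using kinds(1) old[OF subsetD[OF B(1)]] assms(15) by auto
    show "\<forall>e\<in>{s, t} \<union> (Bu - {b}). kind' e = BlueSolid \<or> kind' e = Diffusive"
      using kinds(2) old[OF subsetD[OF B(2)]] assms(16,17) by auto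
  qed
qed

theorem claimA3:
  fixes V :: "'v set" and E :: "'e set"
    and ends :: "'e \<Rightarrow> 'v \<times> 'v" and kind :: "'e \<Rightarrow> edge_kind"
    and Mnew M1 M2 M3 M4 :: 'v and b b1 b2 b3 b4 :: 'e
  assumes "molecular_graph V E ends"
    and "doubly_connected V E ends kind"
    and "Mnew \<notin> V"
    and "M1 \<in> V" and "M2 \<in> V"
    and "b \<in> E" and "kind b = BlueSolid" and "ends b = (M3, M4)"
    and "b1 \<notin> E" and "b2 \<notin> E" and "b3 \<notin> E" and "b4 \<notin> E"
    and "distinct [b1, b2, b3, b4]"
  shows "redundant (insert Mnew V) ({b1, b2, b3, b4} \<union> (E - {b}))
           (ends(b1 := (Mnew, M1), b2 := (Mnew, M2), b3 := (M3, Mnew), b4 := (M4, Mnew)))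
           (kind(b1 := Diffusive, b2 := BlueSolid, b3 := BlueSolid, b4 := BlueSolid))
           b2"
proof -
  define ends' where "ends' = ends(b1 := (Mnew, M1), b2 := (Mnew, M2), b3 := (M3, Mnew), b4 := (M4, Mnew))"
  define kind' where "kind' = kind(b1 := Diffusive, b2 := BlueSolid, b3 := BlueSolid, b4 := BlueSolid)"
  have "\<And>e. e \<in> E \<Longrightarrow> ends' e = ends e \<and> kind' e = kind e"
    using assms(9-12) unfolding ends'_def kind'_def by (metis fun_upd_other)
  moreover have "distinct [b1, b3, b4]" using assms(13) by auto
  ultimately have "doubly_connected (insert Mnew V) ({b1, b3, b4} \<union> (E - {b})) ends' kind'"
    using assms(13) by (intro doubly_connected_subdivide_add_pendant[OF assms(1,2,6,7,8,4,9,11,12)])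
      (auto simp: ends'_def kind'_def)
  moreover have "{b1, b3, b4} \<union> (E - {b}) = {b1, b2, b3, b4} \<union> (E - {b}) - {b2}"
    using assms(10,13) by auto
  moreover have "kind' b2 = BlueSolid" using assms(13) by (simp add: kind'_def)
  ultimately show ?thesis
    unfolding redundant_def ends'_def[symmetric] kind'_def[symmetric]
    by (auto intro: doubly_connected_mono)
qed

end
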